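(* Let $X=\Sigma_P$ be a one-sided subshift with shift $\theta$ on an at most countable alphabet $S$ with transition matrix $P$, and let $\mu$ be a $\theta$-invariant probability measure for which there are a function $p:X\to\mathbb{R}$ and a non-decreasing sequence $K_n>0$ with $\log(K_n)/n\to0$ such that $K_{|w|}^{-1}\le e^{S_wp}/\mu([w])\le K_{|w|}$ for all $w\in\Sigma_P^*$. Let $A\subset X$ be a hole which is a union of $m$-cylinders for some $m\in\mathbb{N}$. Then the reciprocal escape rate $\varphi\mapsto\rho(A,\varphi)^{-1}$ is sublinear on ceiling functions that are bounded and bounded away from zero: for such $\varphi_1,\varphi_2$ and $\lambda>0$ for which $\rho(A,\varphi_1),\rho(A,\varphi_2),\rho(A,\varphi_1+\varphi_2)$ exist and lie in $(0,\infty)$, \[\rho(A,\lambda\varphi_1)^{-1}=\lambda\,\rho(A,\varphi_1)^{-1},\qquad \rho(A,\varphi_1+\varphi_2)^{-1}\le\rho(A,\varphi_1)^{-1}+\rho(A,\varphi_2)^{-1}.\]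
   Context: $\Sigma_P=\{x\in S^{\mathbb{N}}:p_{x_i,x_{i+1}}\ne0\ \forall i\}$; $\Sigma_P^*$ the finite admissible words; $[w]$ the cylinder of $w$, $|w|$ its length; $m$-cylinders are $[w]$ with $|w|=m$. $S_wp=\sup_{x\in[w]}\sum_{k=0}^{|w|-1}p\circ\theta^k(x)$. A ceiling function is a positive measurable $\varphi$ with $\inf\varphi>0$. With $S_n\varphi=\sum_{k<n}\varphi\circ\theta^k$ and $N_t^\varphi(x)=\min\{n\in\mathbb{N}_0:S_n\varphi(x)>t\}$, the special flow is $\overline{X}_\varphi=\{(x,s):0\le s<\varphi(x)\}$ with $\overline{\mu}_\varphi$ the restriction of $\mu\otimes$Lebesgue and $\Phi^\varphi_t(x,s)=(x,s+t)$ if $t<\varphi(x)-s$, else $(\theta^{N-1}x,s+t-S_{N-1}\varphi(x))$, $N=N^\varphi_{s+t}(x)$. A hole is a measurable $A\subset X$ with $\bigcup_{n\ge0}\theta^{-n}A=X$ a.e.; $\rho(A,\varphi)=\lim_{t\to\infty}-\frac1t\log\overline{\mu}_\varphi(\{(x,s):\forall\tau\in[0,t]:\Phi^\varphi_\tau(x,s)\notin A\times\mathbb{R}\})$ when the limit exists. *)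

theory Defs
  imports "HOL-Probability.Probability"
begin

definition sigmaP :: "('a \<Rightarrow> 'a \<Rightarrow> real) \<Rightarrow> (nat \<Rightarrow> 'a) set" where
  "sigmaP P = {x. \<forall>i. P (x i) (x (Suc i)) \<noteq> 0}"

definition shift :: "(nat \<Rightarrow> 'a) \<Rightarrow> (nat \<Rightarrow> 'a)" where
  "shift x = (\<lambda>i. x (Suc i))"

definition admissible :: "('a \<Rightarrow> 'a \<Rightarrow> real) \<Rightarrow> 'a list \<Rightarrow> bool" where
  "admissible P w \<longleftrightarrow> (\<forall>i. Suc i < length w \<longrightarrow> P (w ! i) (w ! Suc i) \<noteq> 0)"

definition cyl :: "('a \<Rightarrow> 'a \<Rightarrow> real) \<Rightarrow> 'a list \<Rightarrow> (nat \<Rightarrow> 'a) set" where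
  "cyl P w = {x \<in> sigmaP P. \<forall>i < length w. x i = w ! i}"

definition Sw :: "('a \<Rightarrow> 'a \<Rightarrow> real) \<Rightarrow> ((nat \<Rightarrow> 'a) \<Rightarrow> real) \<Rightarrow> 'a list \<Rightarrow> ereal" where
  "Sw P p w = (SUP x \<in> cyl P w. ereal (\<Sum>k < length w. p ((shift ^^ k) x)))"

definition birkhoff :: "((nat \<Rightarrow> 'a) \<Rightarrow> real) \<Rightarrow> nat \<Rightarrow> (nat \<Rightarrow> 'a) \<Rightarrow> real" where
  "birkhoff \<phi> n x = (\<Sum>k < n. \<phi> ((shift ^^ k) x))"

definition Nt :: "((nat \<Rightarrow> 'a) \<Rightarrow> real) \<Rightarrow> real \<Rightarrow> (nat \<Rightarrow> 'a) \<Rightarrow> nat" where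
  "Nt \<phi> t x = (LEAST n. birkhoff \<phi> n x > t)"

definition sflow :: "((nat \<Rightarrow> 'a) \<Rightarrow> real) \<Rightarrow> real \<Rightarrow> (nat \<Rightarrow> 'a) \<times> real \<Rightarrow> (nat \<Rightarrow> 'a) \<times> real" where
  "sflow \<phi> t xs = (let x = fst xs; s = snd xs in
     if t < \<phi> x - s then (x, s + t)
     else (let N = Nt \<phi> (s + t) x in ((shift ^^ (N - 1)) x, s + t - birkhoff \<phi> (N - 1) x)))"

definition barX :: "('a \<Rightarrow> 'a \<Rightarrow> real) \<Rightarrow> ((nat \<Rightarrow> 'a) \<Rightarrow> real) \<Rightarrow> ((nat \<Rightarrow> 'a) \<times> real) set" where
  "barX P \<phi> = {(x, s). x \<in> sigmaP P \<and> 0 \<le> s \<and> s < \<phi> x}"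

definition survivors :: "('a \<Rightarrow> 'a \<Rightarrow> real) \<Rightarrow> (nat \<Rightarrow> 'a) set \<Rightarrow> ((nat \<Rightarrow> 'a) \<Rightarrow> real) \<Rightarrow> real
    \<Rightarrow> ((nat \<Rightarrow> 'a) \<times> real) set" where
  "survivors P A \<phi> t = {xs \<in> barX P \<phi>. \<forall>\<tau> \<in> {0..t}. fst (sflow \<phi> \<tau> xs) \<notin> A}"

text \<open>\<mu>-bar_\<phi> is the restriction of \<mu> \<otimes> Lebesgue to barX; survivors are contained in barX.\<close>
definition has_escape_rate :: "('a \<Rightarrow> 'a \<Rightarrow> real) \<Rightarrow> (nat \<Rightarrow> 'a) measure \<Rightarrow> (nat \<Rightarrow> 'a) set
    \<Rightarrow> ((nat \<Rightarrow> 'a) \<Rightarrow> real) \<Rightarrow> real \<Rightarrow> bool" where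
  "has_escape_rate P \<mu> A \<phi> r \<longleftrightarrow>
     ((\<lambda>t. - ln (measure (\<mu> \<Otimes>\<^sub>M lborel) (survivors P A \<phi> t)) / t) \<longlongrightarrow> r) at_top"

definition is_hole :: "(nat \<Rightarrow> 'a) measure \<Rightarrow> (nat \<Rightarrow> 'a) set \<Rightarrow> bool" where
  "is_hole \<mu> A \<longleftrightarrow> A \<in> sets \<mu> \<and> (AE x in \<mu>. x \<in> (\<Union>n. (shift ^^ n) -` A))"

definition bdd_ceiling :: "('a \<Rightarrow> 'a \<Rightarrow> real) \<Rightarrow> (nat \<Rightarrow> 'a) measure \<Rightarrow> ((nat \<Rightarrow> 'a) \<Rightarrow> real) \<Rightarrow> bool" where
  "bdd_ceiling P \<mu> \<phi> \<longleftrightarrow> \<phi> \<in> borel_measurable \<mu> \<and>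
     (\<exists>c C. 0 < c \<and> (\<forall>x \<in> sigmaP P. c \<le> \<phi> x \<and> \<phi> x \<le> C))"

end

theory Submission
  imports Defs
begin

text \<open>For a ceiling function with \<open>c \<le> \<phi> \<le> C\<close>, a point \<open>(x, s)\<close> of the suspension survives
  up to time \<open>t\<close> iff the orbit of \<open>x\<close> avoids the hole at every step \<open>k\<close> with
  \<open>S\<^sub>k\<phi>(x) \<le> s + t\<close>. Let \<open>G\<^sub>\<phi>(t)\<close> be the set of base points with this property for \<open>s = 0\<close>.
  The survivor set contains \<open>G\<^sub>\<phi>(t + c) \<times> [0, c)\<close> and lies in \<open>G\<^sub>\<phi>(t) \<times> [0, C]\<close>, so the
  escape rate \<open>\<rho>(A, \<phi>)\<close> is the exponential decay rate of \<open>\<mu>(G\<^sub>\<phi>(t))\<close>.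
  Since \<open>G\<^bsub>\<lambda>\<phi>\<^esub>(t) = G\<^sub>\<phi>(t/\<lambda>)\<close>, this rate scales by \<open>1/\<lambda>\<close>. Since Birkhoff sums increase
  with \<open>k\<close>, a point avoiding the hole for \<open>\<phi>\<^sub>1 + \<phi>\<^sub>2\<close> up to time \<open>\<alpha>t + \<beta>t\<close> avoids it for
  \<open>\<phi>\<^sub>1\<close> up to \<open>\<alpha>t\<close> or for \<open>\<phi>\<^sub>2\<close> up to \<open>\<beta>t\<close>; choosing \<open>\<alpha>\<rho>\<^sub>1 = \<beta>\<rho>\<^sub>2\<close> with \<open>\<alpha> + \<beta> = 1\<close>
  gives \<open>\<rho>(A, \<phi>\<^sub>1 + \<phi>\<^sub>2) \<ge> \<rho>\<^sub>1\<rho>\<^sub>2 / (\<rho>\<^sub>1 + \<rho>\<^sub>2)\<close>.\<close>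

definition exp_decay_rate :: "(real \<Rightarrow> real) \<Rightarrow> real \<Rightarrow> bool" where
  "exp_decay_rate f r \<longleftrightarrow> ((\<lambda>t. - ln (f t) / t) \<longlongrightarrow> r) at_top"

lemma has_escape_rate_iff_exp_decay_rate:
  "has_escape_rate P \<mu> A \<phi> r \<longleftrightarrow> exp_decay_rate (\<lambda>t. measure (\<mu> \<Otimes>\<^sub>M lborel) (survivors P A \<phi> t)) r"
  by (simp add: has_escape_rate_def exp_decay_rate_def)

lemma filterlim_affine_at_top:
  fixes a d :: real
  assumes "0 < a"
  shows "filterlim (\<lambda>t. a * t + d) at_top at_top"
proof -
  have "filterlim (\<lambda>t. d + a * t) at_top at_top"
    by (intro filterlim_tendsto_add_at_top[OF tendsto_const]
        filterlim_tendsto_pos_mult_at_top[OF tendsto_const assms filterlim_ident])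
  then show ?thesis by (simp add: add.commute)
qed

lemma tendsto_const_divide_at_top: "((\<lambda>t::real. k / t) \<longlongrightarrow> 0) at_top"
  by (intro tendsto_divide_0[OF tendsto_const] filterlim_at_top_imp_at_infinity filterlim_ident)

lemma exp_decay_rate_eventually_bound:
  assumes nonneg: "\<And>t. 0 \<le> f t" and rate: "exp_decay_rate f r" and "0 \<le> r'" "r' < r"
  shows "eventually (\<lambda>t. 0 < f t \<and> f t \<le> exp (- r' * t)) at_top"
  using order_tendstoD(1)[OF rate[unfolded exp_decay_rate_def] \<open>r' < r\<close>] eventually_gt_at_top[of 0]
proof eventually_elim
  case (elim t)
  have "f t \<noteq> 0"
  proof
    assume "f t = 0"
    with elim \<open>0 \<le> r'\<close> show False by simp
  qed
  then have pos: "0 < f t" using nonneg[of t] by simp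
  from elim have "ln (f t) < - r' * t" by (simp add: field_simps)
  then have "exp (ln (f t)) < exp (- r' * t)" by simp
  with pos show ?case by simp
qed

lemma exp_decay_rate_eventually_pos:
  assumes "\<And>t. 0 \<le> f t" "exp_decay_rate f r" "0 < r"
  shows "eventually (\<lambda>t. 0 < f t) at_top"
  using exp_decay_rate_eventually_bound[OF assms(1,2), of 0] assms(3) by (auto elim: eventually_mono)

lemma exp_decay_rate_ge_of_bound:
  assumes rate: "exp_decay_rate f r" and pos: "eventually (\<lambda>t. 0 < f t) at_top" and "0 < D"
    and bound: "eventually (\<lambda>t. f t \<le> D * exp (- \<gamma> * t)) at_top"
  shows "\<gamma> \<le> r"
proof -
  have "((\<lambda>t. \<gamma> - ln D / t) \<longlongrightarrow> \<gamma> - 0) at_top"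
    by (intro tendsto_intros tendsto_const_divide_at_top)
  moreover have "eventually (\<lambda>t. \<gamma> - ln D / t \<le> - ln (f t) / t) at_top"
    using pos bound eventually_gt_at_top[of 0]
  proof eventually_elim
    case (elim t)
    have "ln (f t) \<le> ln (D * exp (- \<gamma> * t))"
      using elim \<open>0 < D\<close> by (subst ln_le_cancel_iff) auto
    also have "\<dots> = ln D - \<gamma> * t" using \<open>0 < D\<close> by (simp add: ln_mult)
    finally have "\<gamma> * t - ln D \<le> - ln (f t)" by simp
    then have "(\<gamma> * t - ln D) / t \<le> - ln (f t) / t" using elim by (intro divide_right_mono) auto
    then show ?case using elim by (simp add: diff_divide_distrib)
  qed
  ultimately show ?thesis
    using tendsto_le[OF trivial_limit_at_top_linorder rate[unfolded exp_decay_rate_def]] by simp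
qed

lemma exp_decay_rate_compose_affine:
  assumes rate: "exp_decay_rate f r" and "0 < a"
  shows "exp_decay_rate (\<lambda>t. f (a * t + d)) (a * r)"
proof -
  have u: "filterlim (\<lambda>t. a * t + d) at_top at_top" by (rule filterlim_affine_at_top[OF \<open>0 < a\<close>])
  have "((\<lambda>t. a + d / t) \<longlongrightarrow> a + 0) at_top"
    by (intro tendsto_intros tendsto_const_divide_at_top)
  moreover have "eventually (\<lambda>t. a + d / t = (a * t + d) / t) at_top"
    using eventually_gt_at_top[of 0] by eventually_elim (simp add: field_simps)
  ultimately have ratio: "((\<lambda>t. (a * t + d) / t) \<longlongrightarrow> a) at_top"
    by (simp add: Lim_transform_eventually)
  have "((\<lambda>t. - ln (f (a * t + d)) / (a * t + d) * ((a * t + d) / t)) \<longlongrightarrow> r * a) at_top"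
    by (intro tendsto_mult ratio filterlim_compose[OF rate[unfolded exp_decay_rate_def] u])
  moreover have "eventually (\<lambda>t. - ln (f (a * t + d)) / (a * t + d) * ((a * t + d) / t)
      = - ln (f (a * t + d)) / t) at_top"
    using eventually_compose_filterlim[OF eventually_gt_at_top[of 0] u] by (auto elim: eventually_mono)
  ultimately show ?thesis
    unfolding exp_decay_rate_def mult.commute[of a r] by (rule Lim_transform_eventually)
qed

lemma exp_decay_rate_mult_const:
  assumes rate: "exp_decay_rate f r" and "0 < k" and pos: "eventually (\<lambda>t. 0 < f t) at_top"
  shows "exp_decay_rate (\<lambda>t. k * f t) r"
proof -
  have "((\<lambda>t. - ln k / t + - ln (f t) / t) \<longlongrightarrow> 0 + r) at_top"
    using rate unfolding exp_decay_rate_def by (intro tendsto_intros tendsto_const_divide_at_top)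
  moreover have "eventually (\<lambda>t. - ln k / t + - ln (f t) / t = - ln (k * f t) / t) at_top"
    using pos by eventually_elim (use \<open>0 < k\<close> in \<open>simp add: ln_mult diff_divide_distrib\<close>)
  ultimately show ?thesis
    unfolding exp_decay_rate_def by (simp add: Lim_transform_eventually)
qed

lemma exp_decay_rate_squeeze:
  assumes lower: "exp_decay_rate g r" and upper: "exp_decay_rate h r"
    and between: "eventually (\<lambda>t. 0 < g t \<and> g t \<le> f t \<and> f t \<le> h t) at_top"
  shows "exp_decay_rate f r"
  unfolding exp_decay_rate_def
proof (rule tendsto_sandwich[OF _ _ upper[unfolded exp_decay_rate_def] lower[unfolded exp_decay_rate_def]])
  show "eventually (\<lambda>t. - ln (h t) / t \<le> - ln (f t) / t) at_top"
    using between eventually_gt_at_top[of 0]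
    by eventually_elim (auto intro: divide_right_mono)
  show "eventually (\<lambda>t. - ln (f t) / t \<le> - ln (g t) / t) at_top"
    using between eventually_gt_at_top[of 0]
    by eventually_elim (auto intro: divide_right_mono)
qed

lemma exp_decay_rate_affine_squeeze:
  assumes nonneg: "\<And>t. 0 \<le> f t" and rate: "exp_decay_rate f r" and "0 < r" "0 < a" "0 < k1" "0 < k2"
    and lower: "eventually (\<lambda>t. k1 * f (a * t + d1) \<le> h t) at_top"
    and upper: "eventually (\<lambda>t. h t \<le> k2 * f (a * t + d2)) at_top"
  shows "exp_decay_rate h (a * r)"
proof -
  have pos: "eventually (\<lambda>t. 0 < f (a * t + d)) at_top" for d
    using eventually_compose_filterlim[OF exp_decay_rate_eventually_pos[OF nonneg rate \<open>0 < r\<close>]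
        filterlim_affine_at_top[OF \<open>0 < a\<close>]] .
  have rate': "exp_decay_rate (\<lambda>t. k * f (a * t + d)) (a * r)" if "0 < k" for k d
    using exp_decay_rate_mult_const[OF exp_decay_rate_compose_affine[OF rate \<open>0 < a\<close>] that pos] .
  show ?thesis
  proof (rule exp_decay_rate_squeeze[OF rate'[OF \<open>0 < k1\<close>] rate'[OF \<open>0 < k2\<close>]])
    show "eventually (\<lambda>t. 0 < k1 * f (a * t + d1) \<and> k1 * f (a * t + d1) \<le> h t \<and> h t \<le> k2 * f (a * t + d2)) at_top"
      using pos[of d1] lower upper by eventually_elim (use \<open>0 < k1\<close> in auto)
  qed
qed

lemma exp_decay_rate_le_of_sum_bound:
  assumes nonneg: "\<And>t. 0 \<le> g1 t" "\<And>t. 0 \<le> g2 t"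
    and rate1: "exp_decay_rate g1 r1" and rate2: "exp_decay_rate g2 r2" and "0 < r1" "0 < r2"
    and rate: "exp_decay_rate f r" and pos: "eventually (\<lambda>t. 0 < f t) at_top"
    and "0 < a" "0 < b" and bound: "eventually (\<lambda>t. f t \<le> g1 (a * t) + g2 (b * t)) at_top"
  shows "min (a * r1) (b * r2) \<le> r"
proof (rule dense_le_bounded)
  show "0 < min (a * r1) (b * r2)" using assms by simp
  fix \<gamma> assume "0 < \<gamma>" "\<gamma> < min (a * r1) (b * r2)"
  have decay: "eventually (\<lambda>t. g (c * t) \<le> exp (- \<gamma> * t)) at_top"
    if "\<And>t. 0 \<le> g t" "exp_decay_rate g \<rho>" "0 < c" "\<gamma> < c * \<rho>" for g c \<rho>
  proof -
    have "eventually (\<lambda>u. 0 < g u \<and> g u \<le> exp (- (\<gamma> / c) * u)) at_top"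
      using that \<open>0 < \<gamma>\<close> by (intro exp_decay_rate_eventually_bound) (auto simp: field_simps)
    from eventually_compose_filterlim[OF this filterlim_affine_at_top[OF \<open>0 < c\<close>, of 0]]
    show ?thesis using \<open>0 < c\<close> by (auto elim: eventually_mono)
  qed
  have "\<gamma> < a * r1" "\<gamma> < b * r2" using \<open>\<gamma> < min _ _\<close> by auto
  have "eventually (\<lambda>t. f t \<le> 2 * exp (- \<gamma> * t)) at_top"
    using bound decay[OF nonneg(1) rate1 \<open>0 < a\<close> \<open>\<gamma> < a * r1\<close>]
      decay[OF nonneg(2) rate2 \<open>0 < b\<close> \<open>\<gamma> < b * r2\<close>]
    by eventually_elim simp
  then show "\<gamma> \<le> r" by (rule exp_decay_rate_ge_of_bound[OF rate pos, rotated]) simp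
qed

lemma funpow_shift: "(shift ^^ k) x = (\<lambda>i. x (i + k))"
  by (induction k arbitrary: x) (auto simp: shift_def)

lemma sigmaP_funpow_shift: "x \<in> sigmaP P \<Longrightarrow> (shift ^^ k) x \<in> sigmaP P"
  by (auto simp: sigmaP_def funpow_shift)

lemma birkhoff_0 [simp]: "birkhoff \<phi> 0 x = 0"
  by (simp add: birkhoff_def)

lemma birkhoff_Suc: "birkhoff \<phi> (Suc k) x = birkhoff \<phi> k x + \<phi> ((shift ^^ k) x)"
  by (simp add: birkhoff_def)

lemma birkhoff_Suc_0 [simp]: "birkhoff \<phi> (Suc 0) x = \<phi> x"
  by (simp add: birkhoff_def)

lemma birkhoff_scale: "birkhoff (\<lambda>x. c * \<phi> x) k x = c * birkhoff \<phi> k x"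
  by (simp add: birkhoff_def sum_distrib_left)

lemma birkhoff_add: "birkhoff (\<lambda>x. \<phi> x + \<psi> x) k x = birkhoff \<phi> k x + birkhoff \<psi> k x"
  by (simp add: birkhoff_def sum.distrib)

lemma strict_mono_birkhoff:
  assumes "\<forall>y\<in>sigmaP P. 0 < \<phi> y" "x \<in> sigmaP P"
  shows "strict_mono (\<lambda>k. birkhoff \<phi> k x)"
  using assms sigmaP_funpow_shift by (auto simp: strict_mono_Suc_iff birkhoff_Suc)

lemma birkhoff_ge_first:
  assumes "\<forall>y\<in>sigmaP P. 0 < \<phi> y" "x \<in> sigmaP P" "0 < k"
  shows "\<phi> x \<le> birkhoff \<phi> k x"
  using strict_mono_less_eq[OF strict_mono_birkhoff[OF assms(1,2)], of "Suc 0" k] assms(3) by simp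

lemma birkhoff_ge:
  assumes "\<forall>y\<in>sigmaP P. c \<le> \<phi> y" "x \<in> sigmaP P"
  shows "real n * c \<le> birkhoff \<phi> n x"
proof (induction n)
  case (Suc n)
  have "c \<le> \<phi> ((shift ^^ n) x)" using assms sigmaP_funpow_shift by blast
  with Suc show ?case by (simp add: birkhoff_Suc algebra_simps)
qed simp

lemma Nt_birkhoff:
  assumes "\<forall>y\<in>sigmaP P. 0 < \<phi> y" "x \<in> sigmaP P"
  shows "Nt \<phi> (birkhoff \<phi> k x) x = Suc k"
  using strict_mono_less[OF strict_mono_birkhoff[OF assms]]
  unfolding Nt_def by (intro Least_equality) (auto simp: Suc_le_eq)

lemma birkhoff_Nt_minus_one_le:
  assumes "\<forall>y\<in>sigmaP P. c \<le> \<phi> y" "0 < c" "x \<in> sigmaP P" "0 \<le> t"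
  shows "birkhoff \<phi> (Nt \<phi> t x - 1) x \<le> t"
proof -
  obtain n :: nat where "t / c < real n" using reals_Archimedean2 by blast
  then have "t < birkhoff \<phi> n x"
    using birkhoff_ge[OF assms(1,3), of n] \<open>0 < c\<close> by (simp add: field_simps)
  then have "t < birkhoff \<phi> (Nt \<phi> t x) x" unfolding Nt_def by (rule LeastI)
  then have "0 < Nt \<phi> t x" using \<open>0 \<le> t\<close> by (intro gr0I) simp
  then have "\<not> t < birkhoff \<phi> (Nt \<phi> t x - 1) x"
    unfolding Nt_def by (intro not_less_Least) simp
  then show ?thesis by simp
qed

lemma fst_sflow_eq_funpow_shift:
  assumes "\<forall>y\<in>sigmaP P. c \<le> \<phi> y" "0 < c" "x \<in> sigmaP P" "0 \<le> s" "0 \<le> \<tau>"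
  obtains k where "birkhoff \<phi> k x \<le> s + \<tau>" "fst (sflow \<phi> \<tau> (x, s)) = (shift ^^ k) x"
proof (cases "\<tau> < \<phi> x - s")
  case True
  then show ?thesis using that[of 0] assms by (simp add: sflow_def)
next
  case False
  then show ?thesis
    using that[of "Nt \<phi> (s + \<tau>) x - 1"] birkhoff_Nt_minus_one_le[OF assms(1-3), of "s + \<tau>"] assms
    by (simp add: sflow_def Let_def)
qed

lemma fst_sflow_birkhoff:
  assumes "\<forall>y\<in>sigmaP P. 0 < \<phi> y" "x \<in> sigmaP P" "0 < k" "s < \<phi> x"
  shows "fst (sflow \<phi> (birkhoff \<phi> k x - s) (x, s)) = (shift ^^ k) x"
  using birkhoff_ge_first[OF assms(1-3)] Nt_birkhoff[OF assms(1,2), of k]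
  by (simp add: sflow_def Let_def)

definition avoiding :: "('a \<Rightarrow> 'a \<Rightarrow> real) \<Rightarrow> (nat \<Rightarrow> 'a) set \<Rightarrow> ((nat \<Rightarrow> 'a) \<Rightarrow> real) \<Rightarrow> real
    \<Rightarrow> (nat \<Rightarrow> 'a) set" where
  "avoiding P A \<phi> t = {x \<in> sigmaP P. \<forall>k. birkhoff \<phi> k x \<le> t \<longrightarrow> (shift ^^ k) x \<notin> A}"

lemma avoiding_antimono: "t \<le> t' \<Longrightarrow> avoiding P A \<phi> t' \<subseteq> avoiding P A \<phi> t"
  by (auto simp: avoiding_def)

lemma avoiding_scale: "0 < c \<Longrightarrow> avoiding P A (\<lambda>x. c * \<phi> x) t = avoiding P A \<phi> (t / c)"
  by (auto simp: avoiding_def birkhoff_scale pos_le_divide_eq mult.commute)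

lemma avoiding_add_subset:
  assumes pos: "\<forall>y\<in>sigmaP P. 0 < \<phi> y" "\<forall>y\<in>sigmaP P. 0 < \<psi> y"
  shows "avoiding P A (\<lambda>x. \<phi> x + \<psi> x) (a + b) \<subseteq> avoiding P A \<phi> a \<union> avoiding P A \<psi> b"
proof
  fix x assume x: "x \<in> avoiding P A (\<lambda>x. \<phi> x + \<psi> x) (a + b)"
  then have "x \<in> sigmaP P" by (simp add: avoiding_def)
  show "x \<in> avoiding P A \<phi> a \<union> avoiding P A \<psi> b"
  proof (rule ccontr)
    assume "x \<notin> avoiding P A \<phi> a \<union> avoiding P A \<psi> b"
    then obtain k1 k2 where k1: "birkhoff \<phi> k1 x \<le> a" "(shift ^^ k1) x \<in> A"
      and k2: "birkhoff \<psi> k2 x \<le> b" "(shift ^^ k2) x \<in> A"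
      using \<open>x \<in> sigmaP P\<close> by (auto simp: avoiding_def)
    have "birkhoff \<phi> (min k1 k2) x \<le> a" "birkhoff \<psi> (min k1 k2) x \<le> b"
      using k1 k2 strict_mono_less_eq[OF strict_mono_birkhoff[OF pos(1) \<open>x \<in> sigmaP P\<close>]]
        strict_mono_less_eq[OF strict_mono_birkhoff[OF pos(2) \<open>x \<in> sigmaP P\<close>]]
      by (meson min.cobounded1 min.cobounded2 order_trans)+
    moreover have "(shift ^^ min k1 k2) x \<in> A" using k1 k2 by (simp add: min_def)
    ultimately show False using x by (auto simp: avoiding_def birkhoff_add)
  qed
qed

lemma survivors_eq:
  assumes "\<forall>y\<in>sigmaP P. c \<le> \<phi> y" "0 < c" "0 \<le> t"
  shows "survivors P A \<phi> t = {(x, s). 0 \<le> s \<and> s < \<phi> x \<and> x \<in> avoiding P A \<phi> (s + t)}"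
proof -
  have pos: "\<forall>y\<in>sigmaP P. 0 < \<phi> y" using assms(1,2) by force
  have "(\<forall>\<tau>\<in>{0..t}. fst (sflow \<phi> \<tau> (x, s)) \<notin> A) \<longleftrightarrow>
      (\<forall>k. birkhoff \<phi> k x \<le> s + t \<longrightarrow> (shift ^^ k) x \<notin> A)"
    if x: "x \<in> sigmaP P" and s: "0 \<le> s" "s < \<phi> x" for x s
  proof safe
    fix k assume "\<forall>\<tau>\<in>{0..t}. fst (sflow \<phi> \<tau> (x, s)) \<notin> A" "birkhoff \<phi> k x \<le> s + t"
      "(shift ^^ k) x \<in> A"
    moreover have "\<exists>\<tau>\<in>{0..t}. fst (sflow \<phi> \<tau> (x, s)) = (shift ^^ k) x"
    proof (cases "k = 0")
      case True
      then show ?thesis using s \<open>0 \<le> t\<close> by (intro bexI[of _ 0]) (auto simp: sflow_def)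
    next
      case False
      then show ?thesis using birkhoff_ge_first[OF pos x, of k] s \<open>birkhoff \<phi> k x \<le> s + t\<close>
        by (intro bexI[of _ "birkhoff \<phi> k x - s"] fst_sflow_birkhoff[OF pos x]) auto
    qed
    ultimately show False by metis
  next
    fix \<tau> assume "\<forall>k. birkhoff \<phi> k x \<le> s + t \<longrightarrow> (shift ^^ k) x \<notin> A" "\<tau> \<in> {0..t}"
      "fst (sflow \<phi> \<tau> (x, s)) \<in> A"
    then show False
      using fst_sflow_eq_funpow_shift[OF assms(1,2) x \<open>0 \<le> s\<close>, of \<tau>] by force
  qed
  then show ?thesis by (auto simp: survivors_def barX_def avoiding_def)
qed

lemma survivors_subset_Times:
  assumes "\<forall>y\<in>sigmaP P. c \<le> \<phi> y \<and> \<phi> y \<le> C" "0 < c" "0 \<le> t"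
  shows "survivors P A \<phi> t \<subseteq> avoiding P A \<phi> t \<times> {0..C}"
proof -
  have "\<forall>y\<in>sigmaP P. c \<le> \<phi> y" using assms(1) by blast
  then show ?thesis
    using assms avoiding_antimono[of t] by (fastforce simp: survivors_eq[OF _ assms(2,3)] avoiding_def)
qed

lemma Times_subset_survivors:
  assumes "\<forall>y\<in>sigmaP P. c \<le> \<phi> y" "0 < c" "0 \<le> t"
  shows "avoiding P A \<phi> (t + c) \<times> {0..<c} \<subseteq> survivors P A \<phi> t"
  using assms avoiding_antimono[of _ "t + c"] by (fastforce simp: survivors_eq avoiding_def)

lemma bdd_ceilingE:
  assumes "bdd_ceiling P \<mu> \<phi>"
  obtains c C where "\<phi> \<in> borel_measurable \<mu>" "0 < c" "c \<le> C" "\<forall>x\<in>sigmaP P. c \<le> \<phi> x \<and> \<phi> x \<le> C"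
proof -
  from assms obtain c C where "\<phi> \<in> borel_measurable \<mu>" "0 < c" "\<forall>x\<in>sigmaP P. c \<le> \<phi> x \<and> \<phi> x \<le> C"
    unfolding bdd_ceiling_def by blast
  then show ?thesis using that[of c "max c C"] by (auto simp: le_max_iff_disj)
qed

lemma bdd_ceiling_measurable: "bdd_ceiling P \<mu> \<phi> \<Longrightarrow> \<phi> \<in> borel_measurable \<mu>"
  by (simp add: bdd_ceiling_def)

lemma bdd_ceiling_pos: "bdd_ceiling P \<mu> \<phi> \<Longrightarrow> \<forall>x\<in>sigmaP P. 0 < \<phi> x"
  unfolding bdd_ceiling_def by force

lemma bdd_ceiling_scale:
  assumes "bdd_ceiling P \<mu> \<phi>" "0 < c"
  shows "bdd_ceiling P \<mu> (\<lambda>x. c * \<phi> x)"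
proof -
  obtain a b where "\<phi> \<in> borel_measurable \<mu>" "0 < a" "\<forall>x\<in>sigmaP P. a \<le> \<phi> x \<and> \<phi> x \<le> b"
    using assms(1) by (rule bdd_ceilingE)
  with \<open>0 < c\<close> show ?thesis
    unfolding bdd_ceiling_def by (intro conjI exI[of _ "c * a"] exI[of _ "c * b"]) auto
qed

lemma bdd_ceiling_add:
  assumes "bdd_ceiling P \<mu> \<phi>" "bdd_ceiling P \<mu> \<psi>"
  shows "bdd_ceiling P \<mu> (\<lambda>x. \<phi> x + \<psi> x)"
proof -
  obtain a b where "\<phi> \<in> borel_measurable \<mu>" "0 < a" "\<forall>x\<in>sigmaP P. a \<le> \<phi> x \<and> \<phi> x \<le> b"
    using assms(1) by (rule bdd_ceilingE)
  moreover obtain a' b' where "\<psi> \<in> borel_measurable \<mu>" "0 < a'" "\<forall>x\<in>sigmaP P. a' \<le> \<psi> x \<and> \<psi> x \<le> b'"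
    using assms(2) by (rule bdd_ceilingE)
  ultimately show ?thesis
    unfolding bdd_ceiling_def by (intro conjI exI[of _ "a + a'"] exI[of _ "b + b'"] borel_measurable_add) force+
qed

locale subshift_with_hole = finite_measure \<mu>
  for \<mu> :: "(nat \<Rightarrow> 'a) measure" +
  fixes P :: "'a \<Rightarrow> 'a \<Rightarrow> real" and A :: "(nat \<Rightarrow> 'a) set"
  assumes space_eq: "space \<mu> = UNIV"
    and shift_measurable [measurable]: "shift \<in> \<mu> \<rightarrow>\<^sub>M \<mu>"
    and hole_sets [measurable]: "A \<in> sets \<mu>"
    and sigmaP_sets [measurable]: "sigmaP P \<in> sets \<mu>"
begin

lemma funpow_shift_measurable [measurable]: "shift ^^ k \<in> \<mu> \<rightarrow>\<^sub>M \<mu>"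
proof (induction k)
  case (Suc k)
  then show ?case unfolding funpow_Suc_right by (rule measurable_comp[OF shift_measurable])
qed simp

lemma birkhoff_measurable [measurable]:
  assumes [measurable]: "\<phi> \<in> borel_measurable \<mu>"
  shows "birkhoff \<phi> k \<in> borel_measurable \<mu>"
  unfolding birkhoff_def by measurable

lemma avoiding_sets:
  assumes [measurable]: "\<phi> \<in> borel_measurable \<mu>"
  shows "avoiding P A \<phi> t \<in> sets \<mu>"
proof -
  have "avoiding P A \<phi> t =
      {x \<in> space \<mu>. x \<in> sigmaP P \<and> (\<forall>k. birkhoff \<phi> k x \<le> t \<longrightarrow> (shift ^^ k) x \<notin> A)}"
    by (auto simp: avoiding_def space_eq)
  also have "\<dots> \<in> sets \<mu>" by measurable
  finally show ?thesis .
qed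

lemma survivors_sets:
  assumes [measurable]: "\<phi> \<in> borel_measurable \<mu>"
    and "\<forall>y\<in>sigmaP P. c \<le> \<phi> y" "0 < c" "0 \<le> t"
  shows "survivors P A \<phi> t \<in> sets (\<mu> \<Otimes>\<^sub>M lborel)"
proof -
  have "survivors P A \<phi> t = {xs \<in> space (\<mu> \<Otimes>\<^sub>M lborel). 0 \<le> snd xs \<and> snd xs < \<phi> (fst xs) \<and>
      fst xs \<in> sigmaP P \<and> (\<forall>k. birkhoff \<phi> k (fst xs) \<le> snd xs + t \<longrightarrow> (shift ^^ k) (fst xs) \<notin> A)}"
    by (auto simp: survivors_eq[OF assms(2-4)] avoiding_def space_pair_measure space_eq)
  also have "\<dots> \<in> sets (\<mu> \<Otimes>\<^sub>M lborel)" by measurable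
  finally show ?thesis .
qed

lemma emeasure_Times_lborel:
  assumes "G \<in> sets \<mu>" "B \<in> sets borel"
  shows "emeasure (\<mu> \<Otimes>\<^sub>M lborel) (G \<times> B) = emeasure \<mu> G * emeasure lborel B"
  using assms by (intro lborel.emeasure_pair_measure_Times) auto

lemma Times_lborel_fmeasurable:
  assumes "G \<in> sets \<mu>" "B \<in> sets borel" "emeasure lborel B < \<infinity>"
  shows "G \<times> B \<in> fmeasurable (\<mu> \<Otimes>\<^sub>M lborel)"
  using assms emeasure_Times_lborel[OF assms(1,2)] emeasure_real[of G]
  by (intro fmeasurableI) (auto simp: ennreal_mult_less_top)

lemma measure_Times_lborel:
  assumes "G \<in> sets \<mu>" "B \<in> sets borel"
  shows "measure (\<mu> \<Otimes>\<^sub>M lborel) (G \<times> B) = measure \<mu> G * measure lborel B"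
  using emeasure_Times_lborel[OF assms] by (simp add: measure_def enn2real_mult)

lemma measure_survivors_le:
  assumes "\<phi> \<in> borel_measurable \<mu>" "\<forall>y\<in>sigmaP P. c \<le> \<phi> y \<and> \<phi> y \<le> C" "0 < c" "c \<le> C" "0 \<le> t"
  shows "measure (\<mu> \<Otimes>\<^sub>M lborel) (survivors P A \<phi> t) \<le> C * measure \<mu> (avoiding P A \<phi> t)"
proof -
  have "measure (\<mu> \<Otimes>\<^sub>M lborel) (survivors P A \<phi> t)
      \<le> measure (\<mu> \<Otimes>\<^sub>M lborel) (avoiding P A \<phi> t \<times> {0..C})"
    using assms by (intro measure_mono_fmeasurable survivors_subset_Times survivors_sets
        Times_lborel_fmeasurable avoiding_sets) auto
  also have "\<dots> = C * measure \<mu> (avoiding P A \<phi> t)"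
    using assms by (simp add: measure_Times_lborel avoiding_sets)
  finally show ?thesis .
qed

lemma measure_survivors_ge:
  assumes "\<phi> \<in> borel_measurable \<mu>" "\<forall>y\<in>sigmaP P. c \<le> \<phi> y \<and> \<phi> y \<le> C" "0 < c" "c \<le> C" "0 \<le> t"
  shows "c * measure \<mu> (avoiding P A \<phi> (t + c)) \<le> measure (\<mu> \<Otimes>\<^sub>M lborel) (survivors P A \<phi> t)"
proof -
  have "survivors P A \<phi> t \<in> fmeasurable (\<mu> \<Otimes>\<^sub>M lborel)"
    using assms by (intro fmeasurableI2[OF Times_lborel_fmeasurable survivors_subset_Times]
        survivors_sets avoiding_sets) auto
  then have "measure (\<mu> \<Otimes>\<^sub>M lborel) (avoiding P A \<phi> (t + c) \<times> {0..<c})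
      \<le> measure (\<mu> \<Otimes>\<^sub>M lborel) (survivors P A \<phi> t)"
    using assms by (intro measure_mono_fmeasurable Times_subset_survivors
        fmeasurableD[OF Times_lborel_fmeasurable] avoiding_sets) auto
  then show ?thesis
    using assms by (simp add: measure_Times_lborel avoiding_sets mult.commute)
qed

lemma escape_rate_iff_avoiding_decay_rate:
  assumes "bdd_ceiling P \<mu> \<phi>" "0 < r"
  shows "has_escape_rate P \<mu> A \<phi> r \<longleftrightarrow> exp_decay_rate (\<lambda>t. measure \<mu> (avoiding P A \<phi> t)) r"
proof -
  obtain c C where bounds: "\<phi> \<in> borel_measurable \<mu>" "0 < c" "c \<le> C"
      "\<forall>x\<in>sigmaP P. c \<le> \<phi> x \<and> \<phi> x \<le> C"
    using assms(1) by (rule bdd_ceilingE)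
  define S where "S = (\<lambda>t. measure (\<mu> \<Otimes>\<^sub>M lborel) (survivors P A \<phi> t))"
  define G where "G = (\<lambda>t. measure \<mu> (avoiding P A \<phi> t))"
  have le: "S t \<le> C * G t" and ge: "c * G (t + c) \<le> S t" if "0 \<le> t" for t
    unfolding S_def G_def using bounds that
    by (blast intro: measure_survivors_le measure_survivors_ge)+
  have "0 < C" using bounds by simp
  have S_nonneg: "0 \<le> S t" and G_nonneg: "0 \<le> G t" for t by (simp_all add: S_def G_def)
  show ?thesis
  proof
    assume "has_escape_rate P \<mu> A \<phi> r"
    then have rate: "exp_decay_rate S r" by (simp add: has_escape_rate_iff_exp_decay_rate S_def)
    have lower: "eventually (\<lambda>t. inverse C * S (1 * t + 0) \<le> G t) at_top"
      using eventually_ge_at_top[of 0] by eventually_elim (use le \<open>0 < C\<close> in \<open>simp add: field_simps\<close>)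
    have upper: "eventually (\<lambda>t. G t \<le> inverse c * S (1 * t + - c)) at_top"
      using eventually_ge_at_top[of c] by eventually_elim (use ge[of "_ - c"] bounds in \<open>simp add: field_simps\<close>)
    have "exp_decay_rate G (1 * r)"
      by (rule exp_decay_rate_affine_squeeze[OF S_nonneg rate \<open>0 < r\<close> zero_less_one _ _ lower upper])
        (use bounds \<open>0 < C\<close> in simp_all)
    then show "exp_decay_rate (\<lambda>t. measure \<mu> (avoiding P A \<phi> t)) r" by (simp add: G_def)
  next
    assume "exp_decay_rate (\<lambda>t. measure \<mu> (avoiding P A \<phi> t)) r"
    then have rate: "exp_decay_rate G r" by (simp add: G_def)
    have lower: "eventually (\<lambda>t. c * G (1 * t + c) \<le> S t) at_top"
      using eventually_ge_at_top[of 0] by eventually_elim (simp add: ge)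
    have upper: "eventually (\<lambda>t. S t \<le> C * G (1 * t + 0)) at_top"
      using eventually_ge_at_top[of 0] by eventually_elim (simp add: le)
    have "exp_decay_rate S (1 * r)"
      by (rule exp_decay_rate_affine_squeeze[OF G_nonneg rate \<open>0 < r\<close> zero_less_one _ _ lower upper])
        (use bounds \<open>0 < C\<close> in simp_all)
    then show "has_escape_rate P \<mu> A \<phi> r" by (simp add: has_escape_rate_iff_exp_decay_rate S_def)
  qed
qed

lemma escape_rate_scale:
  assumes "bdd_ceiling P \<mu> \<phi>" "has_escape_rate P \<mu> A \<phi> r" "0 < r" "0 < c"
  shows "has_escape_rate P \<mu> A (\<lambda>x. c * \<phi> x) (r / c)"
proof -
  have "exp_decay_rate (\<lambda>t. measure \<mu> (avoiding P A \<phi> t)) r"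
    using assms escape_rate_iff_avoiding_decay_rate by blast
  then have "exp_decay_rate (\<lambda>t. measure \<mu> (avoiding P A \<phi> (inverse c * t + 0))) (inverse c * r)"
    using \<open>0 < c\<close> by (intro exp_decay_rate_compose_affine) auto
  then have "exp_decay_rate (\<lambda>t. measure \<mu> (avoiding P A (\<lambda>x. c * \<phi> x) t)) (r / c)"
    using \<open>0 < c\<close> by (simp add: avoiding_scale divide_inverse mult.commute)
  then show ?thesis
    using assms by (simp add: escape_rate_iff_avoiding_decay_rate bdd_ceiling_scale)
qed

lemma inverse_escape_rate_add_le:
  assumes ceil: "bdd_ceiling P \<mu> \<phi>" "bdd_ceiling P \<mu> \<psi>"
    and rates: "has_escape_rate P \<mu> A \<phi> r1" "has_escape_rate P \<mu> A \<psi> r2"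
      "has_escape_rate P \<mu> A (\<lambda>x. \<phi> x + \<psi> x) r12"
    and pos: "0 < r1" "0 < r2" "0 < r12"
  shows "inverse r12 \<le> inverse r1 + inverse r2"
proof -
  define g where "g = (\<lambda>\<phi> t. measure \<mu> (avoiding P A \<phi> t))"
  have g_nonneg: "0 \<le> g \<phi> t" for \<phi> t by (simp add: g_def)
  have decay: "exp_decay_rate (g \<phi>) r1" "exp_decay_rate (g \<psi>) r2"
      "exp_decay_rate (g (\<lambda>x. \<phi> x + \<psi> x)) r12"
    using rates pos ceil bdd_ceiling_add[OF ceil]
    by (simp_all add: g_def escape_rate_iff_avoiding_decay_rate)
  have split: "g (\<lambda>x. \<phi> x + \<psi> x) (a + b) \<le> g \<phi> a + g \<psi> b" for a b
    unfolding g_def using ceil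
    by (intro order_trans[OF finite_measure_mono measure_Un_le] avoiding_add_subset sets.Un
        avoiding_sets bdd_ceiling_pos bdd_ceiling_measurable)
  define a where "a = r2 / (r1 + r2)"
  define b where "b = r1 / (r1 + r2)"
  have "0 < a" "0 < b" using pos by (simp_all add: a_def b_def)
  have "a + b = 1" using pos by (simp add: a_def b_def add_divide_distrib[symmetric])
  then have "g (\<lambda>x. \<phi> x + \<psi> x) t \<le> g \<phi> (a * t) + g \<psi> (b * t)" for t
    using split[of "a * t" "b * t"] by (simp add: distrib_right[symmetric])
  then have "min (a * r1) (b * r2) \<le> r12"
    by (intro exp_decay_rate_le_of_sum_bound[OF g_nonneg g_nonneg decay(1,2) pos(1,2) decay(3)
        exp_decay_rate_eventually_pos[OF g_nonneg decay(3) pos(3)] \<open>0 < a\<close> \<open>0 < b\<close>] always_eventually)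
      simp
  moreover have "a * r1 = inverse (inverse r1 + inverse r2)" "b * r2 = inverse (inverse r1 + inverse r2)"
    using pos by (simp_all add: a_def b_def field_simps)
  ultimately have "inverse (inverse r1 + inverse r2) \<le> r12" by simp
  moreover have "0 < inverse r1 + inverse r2" using pos by (simp add: add_pos_pos)
  ultimately show ?thesis using le_imp_inverse_le by fastforce
qed

end

theorem corollary6p8:
  fixes P :: "'a::countable \<Rightarrow> 'a \<Rightarrow> real"
    and \<mu> :: "(nat \<Rightarrow> 'a) measure"
    and p :: "(nat \<Rightarrow> 'a) \<Rightarrow> real"
    and K :: "nat \<Rightarrow> real"
    and A :: "(nat \<Rightarrow> 'a) set"
    and m :: nat
    and W :: "'a list set"
    and \<phi>1 \<phi>2 :: "(nat \<Rightarrow> 'a) \<Rightarrow> real"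
    and lam r1 r2 r12 :: real
  assumes prob: "prob_space \<mu>"
    and sets_mu: "sets \<mu> = sets (Pi\<^sub>M UNIV (\<lambda>_. count_space UNIV))"
    and supp: "emeasure \<mu> (sigmaP P) = 1"
    and shift_meas: "shift \<in> \<mu> \<rightarrow>\<^sub>M \<mu>"
    and inv: "\<And>B. B \<in> sets \<mu> \<Longrightarrow> emeasure \<mu> (shift -` B \<inter> space \<mu>) = emeasure \<mu> B"
    and Kpos: "\<And>n. K n > 0"
    and Kmono: "mono K"
    and Klog: "(\<lambda>n. ln (K n) / real n) \<longlonglongrightarrow> 0"
    and gibbs: "\<And>w. admissible P w \<Longrightarrow> w \<noteq> [] \<Longrightarrow>
        (\<exists>s. Sw P p w = ereal s \<and>
             inverse (K (length w)) \<le> exp s / measure \<mu> (cyl P w) \<and>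
             exp s / measure \<mu> (cyl P w) \<le> K (length w))"
    and m_pos: "m \<ge> 1"
    and W_len: "\<forall>w \<in> W. length w = m"
    and A_def: "A = (\<Union>w \<in> W. cyl P w)"
    and hole: "is_hole \<mu> A"
    and ceil1: "bdd_ceiling P \<mu> \<phi>1"
    and ceil2: "bdd_ceiling P \<mu> \<phi>2"
    and lam_pos: "lam > 0"
    and r1: "has_escape_rate P \<mu> A \<phi>1 r1" and r1_pos: "r1 > 0"
    and r2: "has_escape_rate P \<mu> A \<phi>2 r2" and r2_pos: "r2 > 0"
    and r12: "has_escape_rate P \<mu> A (\<lambda>x. \<phi>1 x + \<phi>2 x) r12" and r12_pos: "r12 > 0"
  shows "has_escape_rate P \<mu> A (\<lambda>x. lam * \<phi>1 x) (r1 / lam)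
     \<and> inverse r12 \<le> inverse r1 + inverse r2"
proof -
  interpret finite_measure \<mu> using prob by (simp add: prob_space_def)
  interpret subshift_with_hole \<mu> P A
  proof
    show "space \<mu> = UNIV" using sets_eq_imp_space_eq[OF sets_mu] by (simp add: space_PiM)
    show "A \<in> sets \<mu>" using hole by (simp add: is_hole_def)
    show "sigmaP P \<in> sets \<mu>" using supp emeasure_notin_sets by fastforce
  qed (rule shift_meas)
  show ?thesis
    using escape_rate_scale[OF ceil1 r1 r1_pos lam_pos]
      inverse_escape_rate_add_le[OF ceil1 ceil2 r1 r2 r12 r1_pos r2_pos r12_pos]
    by simp
qed

end
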